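(* Let $(H,B_1,B_2)$ be a Rota-Baxter system of Hopf algebras with descendent operation $\circ$ and cocycle $\sigma$, and let $H_1=\operatorname{Im}(\sigma)$. Then (1) $H_1\circ H_1\subseteq H_1$ and $\Delta(H_1)\subseteq H_1\otimes H_1$; (2) denoting by $\circ_1,\Delta_1,\epsilon_1$ the restrictions of $\circ,\Delta,\epsilon$ to $H_1$, $(H_1,\circ_1,1)$ is a unital algebra and $(H_1,\Delta_1,\epsilon_1)$ is a cocommutative coalgebra.
   Context: $\mathbb{F}$ is a field of characteristic $0$; Sweedler notation $\Delta(a)=a_1\otimes a_2$. A Rota-Baxter system of Hopf algebras is a triple $(H,B_1,B_2)$ where $(H,\cdot,1,\Delta,\epsilon,S)$ is a cocommutative Hopf algebra and $B_1,B_2:H\to H$ are coalgebra homomorphisms with $B_1(1)=B_2(1)=1$ such that for all $a,b\in H$: $B_1(a)B_1(b)=B_1(B_1(a_1)bS(B_2(a_2)))$ and $B_2(a)B_2(b)=B_2(B_1(a_1)bS(B_2(a_2)))$. Its descendent operation is $a\circ b=B_1(a_1)bS(B_2(a_2))$ and cocycle $\sigma(a)=B_1(a_1)S(B_2(a_2))$. *)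

theory Defs
  imports Main "HOL.Vector_Spaces"
begin

text \<open>
  Elements of tensor powers of H are
  represented by finite lists of pure tensors; two such lists denote the same
  tensor iff they agree under all multilinear forms (over a field the canonical map
  from the tensor power to the dual of the space of multilinear forms is injective,
  so this is exactly equality in the tensor power). The coproduct is a map
  delta sending a to a list representing Delta(a); Sweedler sums a_1 (x) a_2 fed into
  a bilinear map f are computed as tsum f (delta a).
\<close>

definition bilin_form :: "('k::field \<Rightarrow> 'h::ab_group_add \<Rightarrow> 'h) \<Rightarrow> ('h \<Rightarrow> 'h \<Rightarrow> 'k) \<Rightarrow> bool" where
  "bilin_form sc \<phi> \<longleftrightarrow>
     (\<forall>x y z. \<phi> (x + y) z = \<phi> x z + \<phi> y z) \<and> (\<forall>c x z. \<phi> (sc c x) z = c * \<phi> x z) \<and>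
     (\<forall>x y z. \<phi> z (x + y) = \<phi> z x + \<phi> z y) \<and> (\<forall>c x z. \<phi> z (sc c x) = c * \<phi> z x)"

definition trilin_form :: "('k::field \<Rightarrow> 'h::ab_group_add \<Rightarrow> 'h) \<Rightarrow> ('h \<Rightarrow> 'h \<Rightarrow> 'h \<Rightarrow> 'k) \<Rightarrow> bool" where
  "trilin_form sc \<psi> \<longleftrightarrow>
     (\<forall>u. bilin_form sc (\<lambda>x y. \<psi> x y u) \<and> bilin_form sc (\<lambda>x y. \<psi> x u y)
          \<and> bilin_form sc (\<lambda>x y. \<psi> u x y))"

definition tsum :: "('h \<Rightarrow> 'h \<Rightarrow> 'b::comm_monoid_add) \<Rightarrow> ('h \<times> 'h) list \<Rightarrow> 'b" where
  "tsum f L = (\<Sum>(x, y)\<leftarrow>L. f x y)"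

definition tsum3 :: "('h \<Rightarrow> 'h \<Rightarrow> 'h \<Rightarrow> 'b::comm_monoid_add) \<Rightarrow> ('h \<times> 'h \<times> 'h) list \<Rightarrow> 'b" where
  "tsum3 f L = (\<Sum>(x, y, z)\<leftarrow>L. f x y z)"

definition teq :: "('k::field \<Rightarrow> 'h::ab_group_add \<Rightarrow> 'h) \<Rightarrow> ('h \<times> 'h) list \<Rightarrow> ('h \<times> 'h) list \<Rightarrow> bool" where
  "teq sc L M \<longleftrightarrow> (\<forall>\<phi>. bilin_form sc \<phi> \<longrightarrow> tsum \<phi> L = tsum \<phi> M)"

definition teq3 :: "('k::field \<Rightarrow> 'h::ab_group_add \<Rightarrow> 'h) \<Rightarrow> ('h \<times> 'h \<times> 'h) list \<Rightarrow> ('h \<times> 'h \<times> 'h) list \<Rightarrow> bool" where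
  "teq3 sc L M \<longleftrightarrow> (\<forall>\<psi>. trilin_form sc \<psi> \<longrightarrow> tsum3 \<psi> L = tsum3 \<psi> M)"

definition lin_on :: "('k::field \<Rightarrow> 'h::ab_group_add \<Rightarrow> 'h) \<Rightarrow> 'h set \<Rightarrow> ('h \<Rightarrow> 'h) \<Rightarrow> bool" where
  "lin_on sc W f \<longleftrightarrow> (\<forall>x\<in>W. \<forall>y\<in>W. f (x + y) = f x + f y) \<and> (\<forall>c. \<forall>x\<in>W. f (sc c x) = sc c (f x))"

definition flin_on :: "('k::field \<Rightarrow> 'h::ab_group_add \<Rightarrow> 'h) \<Rightarrow> 'h set \<Rightarrow> ('h \<Rightarrow> 'k) \<Rightarrow> bool" where
  "flin_on sc W f \<longleftrightarrow> (\<forall>x\<in>W. \<forall>y\<in>W. f (x + y) = f x + f y) \<and> (\<forall>c. \<forall>x\<in>W. f (sc c x) = c * f x)"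

definition algebra_over :: "('k::field \<Rightarrow> 'h::ring_1 \<Rightarrow> 'h) \<Rightarrow> bool" where
  "algebra_over sc \<longleftrightarrow> vector_space sc \<and>
     (\<forall>c x y. sc c (x * y) = sc c x * y \<and> sc c (x * y) = x * sc c y)"

definition unital_algebra_on ::
  "('k::field \<Rightarrow> 'h::ab_group_add \<Rightarrow> 'h) \<Rightarrow> 'h set \<Rightarrow> ('h \<Rightarrow> 'h \<Rightarrow> 'h) \<Rightarrow> 'h \<Rightarrow> bool" where
  "unital_algebra_on sc W m u \<longleftrightarrow>
     module.subspace sc W \<and> u \<in> W \<and> (\<forall>a\<in>W. \<forall>b\<in>W. m a b \<in> W) \<and>
     (\<forall>b\<in>W. lin_on sc W (\<lambda>a. m a b)) \<and> (\<forall>a\<in>W. lin_on sc W (\<lambda>b. m a b)) \<and>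
     (\<forall>a\<in>W. \<forall>b\<in>W. \<forall>c\<in>W. m (m a b) c = m a (m b c)) \<and>
     (\<forall>a\<in>W. m u a = a \<and> m a u = a)"

definition coalgebra_on ::
  "('k::field \<Rightarrow> 'h::ab_group_add \<Rightarrow> 'h) \<Rightarrow> 'h set \<Rightarrow> ('h \<Rightarrow> ('h \<times> 'h) list) \<Rightarrow> ('h \<Rightarrow> 'k) \<Rightarrow> bool" where
  "coalgebra_on sc W delta eps \<longleftrightarrow>
     module.subspace sc W \<and>
     (\<forall>a\<in>W. \<exists>L. set L \<subseteq> W \<times> W \<and> teq sc (delta a) L) \<and>
     (\<forall>a\<in>W. \<forall>b\<in>W. teq sc (delta (a + b)) (delta a @ delta b)) \<and>
     (\<forall>c. \<forall>a\<in>W. teq sc (delta (sc c a)) (map (\<lambda>(x, y). (sc c x, y)) (delta a))) \<and>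
     flin_on sc W eps \<and>
     (\<forall>a\<in>W. teq3 sc
        (concat (map (\<lambda>(x, y). map (\<lambda>(x1, x2). (x1, x2, y)) (delta x)) (delta a)))
        (concat (map (\<lambda>(x, y). map (\<lambda>(y1, y2). (x, y1, y2)) (delta y)) (delta a)))) \<and>
     (\<forall>a\<in>W. tsum (\<lambda>x y. sc (eps x) y) (delta a) = a \<and> tsum (\<lambda>x y. sc (eps y) x) (delta a) = a)"

definition cocommutative_on ::
  "('k::field \<Rightarrow> 'h::ab_group_add \<Rightarrow> 'h) \<Rightarrow> 'h set \<Rightarrow> ('h \<Rightarrow> ('h \<times> 'h) list) \<Rightarrow> bool" where
  "cocommutative_on sc W delta \<longleftrightarrow> (\<forall>a\<in>W. teq sc (delta a) (map (\<lambda>(x, y). (y, x)) (delta a)))"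

definition cocomm_hopf_algebra ::
  "('k::field \<Rightarrow> 'h::ring_1 \<Rightarrow> 'h) \<Rightarrow> ('h \<Rightarrow> ('h \<times> 'h) list) \<Rightarrow> ('h \<Rightarrow> 'k) \<Rightarrow> ('h \<Rightarrow> 'h) \<Rightarrow> bool" where
  "cocomm_hopf_algebra sc delta eps S \<longleftrightarrow>
     algebra_over sc \<and> coalgebra_on sc UNIV delta eps \<and> cocommutative_on sc UNIV delta \<and>
     (\<forall>a b. teq sc (delta (a * b))
        (concat (map (\<lambda>(x, y). map (\<lambda>(u, v). (x * u, y * v)) (delta b)) (delta a)))) \<and>
     teq sc (delta 1) [(1, 1)] \<and>
     (\<forall>a b. eps (a * b) = eps a * eps b) \<and> eps 1 = 1 \<and>
     lin_on sc UNIV S \<and>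
     (\<forall>a. tsum (\<lambda>x y. S x * y) (delta a) = sc (eps a) 1 \<and>
          tsum (\<lambda>x y. x * S y) (delta a) = sc (eps a) 1)"

definition coalg_hom ::
  "('k::field \<Rightarrow> 'h::ab_group_add \<Rightarrow> 'h) \<Rightarrow> ('h \<Rightarrow> ('h \<times> 'h) list) \<Rightarrow> ('h \<Rightarrow> 'k) \<Rightarrow> ('h \<Rightarrow> 'h) \<Rightarrow> bool" where
  "coalg_hom sc delta eps B \<longleftrightarrow>
     lin_on sc UNIV B \<and>
     (\<forall>a. teq sc (delta (B a)) (map (\<lambda>(x, y). (B x, B y)) (delta a))) \<and>
     (\<forall>a. eps (B a) = eps a)"

definition desc_op :: "('h \<Rightarrow> ('h \<times> 'h) list) \<Rightarrow> ('h::ring_1 \<Rightarrow> 'h) \<Rightarrow> ('h \<Rightarrow> 'h) \<Rightarrow> ('h \<Rightarrow> 'h) \<Rightarrow> 'h \<Rightarrow> 'h \<Rightarrow> 'h" where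
  "desc_op delta S B1 B2 a b = tsum (\<lambda>x y. B1 x * b * S (B2 y)) (delta a)"

definition cocycle :: "('h \<Rightarrow> ('h \<times> 'h) list) \<Rightarrow> ('h::ring_1 \<Rightarrow> 'h) \<Rightarrow> ('h \<Rightarrow> 'h) \<Rightarrow> ('h \<Rightarrow> 'h) \<Rightarrow> 'h \<Rightarrow> 'h" where
  "cocycle delta S B1 B2 a = tsum (\<lambda>x y. B1 x * S (B2 y)) (delta a)"

definition rota_baxter_system ::
  "('k::field \<Rightarrow> 'h::ring_1 \<Rightarrow> 'h) \<Rightarrow> ('h \<Rightarrow> ('h \<times> 'h) list) \<Rightarrow> ('h \<Rightarrow> 'k) \<Rightarrow> ('h \<Rightarrow> 'h)
    \<Rightarrow> ('h \<Rightarrow> 'h) \<Rightarrow> ('h \<Rightarrow> 'h) \<Rightarrow> bool" where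
  "rota_baxter_system sc delta eps S B1 B2 \<longleftrightarrow>
     cocomm_hopf_algebra sc delta eps S \<and>
     coalg_hom sc delta eps B1 \<and> coalg_hom sc delta eps B2 \<and> B1 1 = 1 \<and> B2 1 = 1 \<and>
     (\<forall>a b. B1 a * B1 b = B1 (desc_op delta S B1 B2 a b)) \<and>
     (\<forall>a b. B2 a * B2 b = B2 (desc_op delta S B1 B2 a b))"

end

theory Submission
  imports Defs
begin

text \<open>Because \<open>B\<^sub>1\<close>, \<open>B\<^sub>2\<close> and \<open>S\<close> are coalgebra maps and \<open>H\<close> is cocommutative,
  \<open>\<Delta>(a \<circ> b) = (a\<^sub>1 \<circ> b\<^sub>1) \<otimes> (a\<^sub>2 \<circ> b\<^sub>2)\<close>. Together with the Rota-Baxter identities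
  and \<open>S(xy) = S(y) S(x)\<close> this makes \<open>\<circ>\<close> associative, and \<open>1 \<circ> b = b\<close>. Since
  \<open>\<sigma>(a) = a \<circ> 1\<close>, its image is closed under \<open>\<circ>\<close> by \<open>(a \<circ> 1) \<circ> (b \<circ> 1) = (a \<circ> b) \<circ> 1\<close>,
  contains \<open>1 = 1 \<circ> 1\<close>, has \<open>1\<close> as a two-sided unit, and is a subcoalgebra because
  \<open>\<Delta>(\<sigma>(a)) = \<sigma>(a\<^sub>1) \<otimes> \<sigma>(a\<^sub>2)\<close>; the remaining coalgebra axioms and cocommutativity are
  inherited from \<open>H\<close>.\<close>

lemma tsum_Nil [simp]: "tsum f [] = 0"
  by (simp add: tsum_def)

lemma tsum_Cons [simp]: "tsum f ((x, y) # L) = f x y + tsum f L"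
  by (simp add: tsum_def)

lemma tsum_append [simp]: "tsum f (L @ M) = tsum f L + tsum f M"
  by (simp add: tsum_def)

lemma tsum_map_pair [simp]:
  "tsum f (map (\<lambda>(x, y). (A x, B y)) L) = tsum (\<lambda>x y. f (A x) (B y)) L"
  by (induct L) auto

lemma tsum_map_swap [simp]: "tsum f (map (\<lambda>(x, y). (y, x)) L) = tsum (\<lambda>x y. f y x) L"
  by (induct L) auto

lemma tsum_concat_map: "tsum f (concat (map G L)) = tsum (\<lambda>x y. tsum f (G (x, y))) L"
  by (induct L) auto

lemma tsum_hom:
  assumes "\<And>a b. g (a + b) = g a + g b" and "g 0 = 0"
  shows "tsum (\<lambda>x y. g (f x y)) L = g (tsum f L)"
  by (induct L) (auto simp: assms)

lemma tsum_add: "tsum (\<lambda>x y. f x y + g x y) L = tsum f L + tsum g L"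
  by (induct L) (auto simp: algebra_simps)

lemma tsum_swap: "tsum (\<lambda>x y. tsum (g x y) M) L = tsum (\<lambda>u v. tsum (\<lambda>x y. g x y u v) L) M"
proof (induct L)
  case Nil
  then show ?case by (induct M) auto
next
  case (Cons p L)
  then show ?case by (cases p) (simp add: tsum_add)
qed

lemma tsum_cong: "(\<And>x y. (x, y) \<in> set L \<Longrightarrow> f x y = g x y) \<Longrightarrow> tsum f L = tsum g L"
  by (induct L) auto

lemma tsum3_Nil [simp]: "tsum3 f [] = 0"
  by (simp add: tsum3_def)

lemma tsum3_Cons [simp]: "tsum3 f ((x, y, z) # L) = f x y z + tsum3 f L"
  by (simp add: tsum3_def)

lemma tsum3_append [simp]: "tsum3 f (L @ M) = tsum3 f L + tsum3 f M"
  by (simp add: tsum3_def)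

lemma tsum3_concat_map: "tsum3 f (concat (map G L)) = tsum (\<lambda>x y. tsum3 f (G (x, y))) L"
  by (induct L) auto

lemma tsum3_map_left [simp]:
  "tsum3 f (map (\<lambda>(x1, x2). (x1, x2, y)) L) = tsum (\<lambda>x1 x2. f x1 x2 y) L"
  by (induct L) auto

lemma tsum3_map_Pair [simp]: "tsum3 f (map (Pair x) L) = tsum (f x) L"
  by (induct L) auto

lemma tsum3_hom:
  assumes "\<And>a b. g (a + b) = g a + g b" and "g 0 = 0"
  shows "tsum3 (\<lambda>x y z. g (f x y z)) L = g (tsum3 f L)"
  by (induct L) (auto simp: assms)

lemma vector_space_field_mult: "vector_space ((*) :: 'k::field \<Rightarrow> 'k \<Rightarrow> 'k)"
  by unfold_locales (auto simp: algebra_simps)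

lemma vector_space_exists_functional:
  fixes sc :: "'k::field \<Rightarrow> 'h::ab_group_add \<Rightarrow> 'h" and v :: 'h
  assumes "vector_space sc" and "v \<noteq> 0"
  shows "\<exists>g. Vector_Spaces.linear sc (*) g \<and> g v = 1"
proof -
  interpret vector_space_pair sc "(*) :: 'k \<Rightarrow> 'k \<Rightarrow> 'k"
    using assms(1) vector_space_field_mult by (simp add: vector_space_pair_def)
  have "vs1.independent {v}"
    using assms(2) by simp
  from linear_independent_extend[OF this, of "\<lambda>_. 1"] show ?thesis
    by auto
qed

lemma unital_algebra_on_range_mult_unit:
  fixes sc :: "'k::field \<Rightarrow> 'h::ab_group_add \<Rightarrow> 'h" and m :: "'h \<Rightarrow> 'h \<Rightarrow> 'h"
  assumes "vector_space sc"
    and linear_left: "\<And>b. Vector_Spaces.linear sc sc (\<lambda>a. m a b)"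
    and linear_right: "\<And>a. Vector_Spaces.linear sc sc (m a)"
    and assoc: "\<And>a b c. m (m a b) c = m a (m b c)" and left_unit: "\<And>a. m u a = a"
  shows "unital_algebra_on sc (range (\<lambda>a. m a u)) m u"
proof -
  interpret vector_space_pair sc sc
    using assms(1) by (simp add: vector_space_pair_def)
  have right_unit: "m (m a u) u = m a u" for a
    by (simp add: assoc left_unit)
  have closed: "m (m a u) (m b u) = m (m a b) u" for a b
    by (simp add: assoc left_unit)
  show ?thesis
    unfolding unital_algebra_on_def lin_on_def
  proof (intro conjI ballI allI)
    show "vs1.subspace (range (\<lambda>a. m a u))"
      using linear_subspace_image[OF linear_left vs1.subspace_UNIV] .
    show "u \<in> range (\<lambda>a. m a u)"
      using left_unit[of u] by (metis rangeI)
    show "m x y \<in> range (\<lambda>a. m a u)" if "x \<in> range (\<lambda>a. m a u)" "y \<in> range (\<lambda>a. m a u)" for x y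
      using that closed by auto
  qed (auto simp: assoc left_unit closed right_unit linear_add[OF linear_left]
      linear_add[OF linear_right] linear_scale[OF linear_left] linear_scale[OF linear_right])
qed

lemma coalgebra_on_subspace:
  assumes "coalgebra_on sc UNIV delta eps" and "module.subspace sc W"
    and "\<forall>a\<in>W. \<exists>L. set L \<subseteq> W \<times> W \<and> teq sc (delta a) L"
  shows "coalgebra_on sc W delta eps"
  using assms unfolding coalgebra_on_def flin_on_def by blast

lemma cocommutative_on_subset:
  "cocommutative_on sc W delta \<Longrightarrow> V \<subseteq> W \<Longrightarrow> cocommutative_on sc V delta"
  unfolding cocommutative_on_def by blast

locale field_algebra =
  fixes sc :: "'k::field \<Rightarrow> 'h::ring_1 \<Rightarrow> 'h"
  assumes algebra: "algebra_over sc"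
begin

sublocale V: vector_space sc
  using algebra by (simp add: algebra_over_def)

sublocale VP: vector_space_pair sc sc
  by (simp add: vector_space_pair_def V.vector_space_axioms)

abbreviation lin :: "('h \<Rightarrow> 'h) \<Rightarrow> bool" where
  "lin \<equiv> Vector_Spaces.linear sc sc"

lemma scale_mult_left: "sc c (x * y) = sc c x * y"
  using algebra by (simp add: algebra_over_def)

lemma scale_mult_right: "sc c (x * y) = x * sc c y"
  using algebra unfolding algebra_over_def by blast

lemma linI: "(\<And>x y. f (x + y) = f x + f y) \<Longrightarrow> (\<And>c x. f (sc c x) = sc c (f x)) \<Longrightarrow> lin f"
  by (simp add: linear_iff V.vector_space_axioms)

definition bilinear :: "('h \<Rightarrow> 'h \<Rightarrow> 'h) \<Rightarrow> bool" where
  "bilinear f \<longleftrightarrow> (\<forall>y. lin (\<lambda>x. f x y)) \<and> (\<forall>x. lin (f x))"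

definition trilinear :: "('h \<Rightarrow> 'h \<Rightarrow> 'h \<Rightarrow> 'h) \<Rightarrow> bool" where
  "trilinear f \<longleftrightarrow>
     (\<forall>y z. lin (\<lambda>x. f x y z)) \<and> (\<forall>x z. lin (\<lambda>y. f x y z)) \<and> (\<forall>x y. lin (f x y))"

definition quadrilinear :: "('h \<Rightarrow> 'h \<Rightarrow> 'h \<Rightarrow> 'h \<Rightarrow> 'h) \<Rightarrow> bool" where
  "quadrilinear g \<longleftrightarrow> (\<forall>b c d. lin (\<lambda>a. g a b c d)) \<and> (\<forall>a c d. lin (\<lambda>b. g a b c d))
    \<and> (\<forall>a b d. lin (\<lambda>c. g a b c d)) \<and> (\<forall>a b c. lin (g a b c))"

lemma bilinearI: "(\<And>y. lin (\<lambda>x. f x y)) \<Longrightarrow> (\<And>x. lin (\<lambda>y. f x y)) \<Longrightarrow> bilinear f"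
  by (auto simp: bilinear_def)

lemma trilinearI:
  "(\<And>y z. lin (\<lambda>x. f x y z)) \<Longrightarrow> (\<And>x z. lin (\<lambda>y. f x y z)) \<Longrightarrow> (\<And>x y. lin (\<lambda>z. f x y z))
    \<Longrightarrow> trilinear f"
  by (auto simp: trilinear_def)

lemma quadrilinearI:
  "(\<And>b c d. lin (\<lambda>a. g a b c d)) \<Longrightarrow> (\<And>a c d. lin (\<lambda>b. g a b c d)) \<Longrightarrow>
    (\<And>a b d. lin (\<lambda>c. g a b c d)) \<Longrightarrow> (\<And>a b c. lin (\<lambda>d. g a b c d)) \<Longrightarrow> quadrilinear g"
  by (auto simp: quadrilinear_def)

lemma lin_compose: "lin f \<Longrightarrow> lin g \<Longrightarrow> lin (\<lambda>x. f (g x))"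
  using Vector_Spaces.linear_compose[of sc sc g sc f] by (simp add: comp_def)

lemma lin_id: "lin (\<lambda>x. x)"
  by (rule linI) auto

lemma lin_add: "lin f \<Longrightarrow> lin g \<Longrightarrow> lin (\<lambda>x. f x + g x)"
  by (rule linI) (auto simp: VP.linear_add VP.linear_scale V.scale_right_distrib)

lemma lin_mult_right: "lin f \<Longrightarrow> lin (\<lambda>x. f x * c)"
  by (rule linI) (auto simp: VP.linear_add VP.linear_scale distrib_right scale_mult_left)

lemma lin_mult_left: "lin f \<Longrightarrow> lin (\<lambda>x. c * f x)"
  by (rule linI) (auto simp: VP.linear_add VP.linear_scale distrib_left scale_mult_right)

lemma lin_scale: "lin f \<Longrightarrow> lin (\<lambda>x. sc c (f x))"
  by (rule linI) (auto simp: VP.linear_add VP.linear_scale V.scale_right_distrib mult.commute)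

lemma lin_tsum: "(\<And>u v. lin (\<lambda>x. F x u v)) \<Longrightarrow> lin (\<lambda>x. tsum (F x) L)"
proof (induct L)
  case Nil
  then show ?case by (intro linI) auto
next
  case (Cons p L)
  then show ?case by (cases p) (auto intro!: lin_add)
qed

lemma lin_bilinear_left: "bilinear f \<Longrightarrow> lin g \<Longrightarrow> lin (\<lambda>x. f (g x) c)"
  unfolding bilinear_def by (auto intro: lin_compose[where f = "\<lambda>x. f x c"])

lemma lin_bilinear_right: "bilinear f \<Longrightarrow> lin g \<Longrightarrow> lin (\<lambda>x. f c (g x))"
  unfolding bilinear_def by (auto intro: lin_compose)

lemma lin_quadrilinear:
  assumes "quadrilinear f" and "lin g"
  shows "lin (\<lambda>x. f (g x) b c d)" "lin (\<lambda>x. f a (g x) c d)" "lin (\<lambda>x. f a b (g x) d)"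
    "lin (\<lambda>x. f a b c (g x))"
  using assms unfolding quadrilinear_def
  by (auto intro: lin_compose[where f = "\<lambda>x. f x b c d"] lin_compose[where f = "\<lambda>x. f a x c d"]
      lin_compose[where f = "\<lambda>x. f a b x d"] lin_compose[where f = "f a b c"])

lemma tsum_lin: "lin g \<Longrightarrow> tsum (\<lambda>x y. g (f x y)) L = g (tsum f L)"
  by (rule tsum_hom) (auto simp: VP.linear_add VP.linear_0)

lemma tsum_scale: "tsum (\<lambda>x y. sc c (f x y)) L = sc c (tsum f L)"
  by (rule tsum_hom) (auto simp: V.scale_right_distrib)

text \<open>Tensor equality is tested against scalar-valued forms only; composing an H-valued
  multilinear map with a functional that separates the two sides reduces to that case.\<close>

lemma teq_tsum_eq:
  assumes "teq sc L M" and "bilinear f"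
  shows "tsum f L = tsum f M"
proof (rule ccontr)
  assume "tsum f L \<noteq> tsum f M"
  then obtain g where g: "Vector_Spaces.linear sc (*) g" "g (tsum f L - tsum f M) = 1"
    using vector_space_exists_functional[OF V.vector_space_axioms] by force
  interpret G: vector_space_pair sc "(*) :: 'k \<Rightarrow> 'k \<Rightarrow> 'k"
    by (simp add: vector_space_pair_def V.vector_space_axioms vector_space_field_mult)
  have "bilin_form sc (\<lambda>x y. g (f x y))"
    using assms(2) g(1) unfolding bilin_form_def bilinear_def linear_iff by auto
  then have "tsum (\<lambda>x y. g (f x y)) L = tsum (\<lambda>x y. g (f x y)) M"
    using assms(1) by (simp add: teq_def)
  then have "g (tsum f L) = g (tsum f M)"
    by (simp add: tsum_hom G.linear_add[OF g(1)] G.linear_0[OF g(1)])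
  then show False
    using g by (simp add: G.linear_diff)
qed

lemma teq3_tsum3_eq:
  assumes "teq3 sc L M" and "trilinear f"
  shows "tsum3 f L = tsum3 f M"
proof (rule ccontr)
  assume "tsum3 f L \<noteq> tsum3 f M"
  then obtain g where g: "Vector_Spaces.linear sc (*) g" "g (tsum3 f L - tsum3 f M) = 1"
    using vector_space_exists_functional[OF V.vector_space_axioms] by force
  interpret G: vector_space_pair sc "(*) :: 'k \<Rightarrow> 'k \<Rightarrow> 'k"
    by (simp add: vector_space_pair_def V.vector_space_axioms vector_space_field_mult)
  have "trilin_form sc (\<lambda>x y z. g (f x y z))"
    using assms(2) g(1) unfolding trilin_form_def bilin_form_def trilinear_def linear_iff by auto
  then have "tsum3 (\<lambda>x y z. g (f x y z)) L = tsum3 (\<lambda>x y z. g (f x y z)) M"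
    using assms(1) by (simp add: teq3_def)
  then have "g (tsum3 f L) = g (tsum3 f M)"
    by (simp add: tsum3_hom G.linear_add[OF g(1)] G.linear_0[OF g(1)])
  then show False
    using g by (simp add: G.linear_diff)
qed

text \<open>Conversely, a scalar form \<phi> is recovered from the bilinear map \<open>\<lambda>x y. sc (\<phi> x y) 1\<close>,
  unless H is the zero ring, where every tensor vanishes.\<close>

lemma teqI_bilinear:
  assumes "\<And>f. bilinear f \<Longrightarrow> tsum f L = tsum f M"
  shows "teq sc L M"
  unfolding teq_def
proof (intro allI impI)
  fix \<phi> assume \<phi>: "bilin_form sc \<phi>"
  show "tsum \<phi> L = tsum \<phi> M"
  proof (cases "(1::'h) = 0")
    case True
    then have zero: "x = 0" for x :: 'h
      by (metis mult_1_right mult_zero_right)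
    have "\<phi> 0 z = 0" for z
      using \<phi> unfolding bilin_form_def by (metis V.scale_zero_left mult_zero_left)
    then have "\<phi> x y = 0" for x y
      using zero[of x] by simp
    then have "tsum \<phi> K = 0" for K
      by (induct K) auto
    then show ?thesis by simp
  next
    case False
    have "bilinear (\<lambda>x y. sc (\<phi> x y) 1)"
      using \<phi> by (intro bilinearI linI) (auto simp: bilin_form_def V.scale_left_distrib)
    then have "tsum (\<lambda>x y. sc (\<phi> x y) 1) L = tsum (\<lambda>x y. sc (\<phi> x y) 1) M"
      by (rule assms)
    moreover have "tsum (\<lambda>x y. sc (\<phi> x y) 1) K = sc (tsum \<phi> K) 1" for K
      by (rule tsum_hom[where g = "\<lambda>t. sc t 1"]) (auto simp: V.scale_left_distrib)
    ultimately have "sc (tsum \<phi> L - tsum \<phi> M) 1 = 0"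
      by (simp add: V.scale_left_diff_distrib)
    then show ?thesis
      using False by simp
  qed
qed

end

locale cocomm_hopf =
  fixes sc :: "'k::field \<Rightarrow> 'h::ring_1 \<Rightarrow> 'h" and delta :: "'h \<Rightarrow> ('h \<times> 'h) list"
    and eps :: "'h \<Rightarrow> 'k" and S :: "'h \<Rightarrow> 'h"
  assumes hopf: "cocomm_hopf_algebra sc delta eps S"
begin

sublocale field_algebra sc
  using hopf by unfold_locales (simp add: cocomm_hopf_algebra_def)

abbreviation sweedler :: "('h \<Rightarrow> 'h \<Rightarrow> 'h) \<Rightarrow> 'h \<Rightarrow> 'h" where
  "sweedler f a \<equiv> tsum f (delta a)"

lemma coalgebra: "coalgebra_on sc UNIV delta eps"
  using hopf by (simp add: cocomm_hopf_algebra_def)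

lemma lin_S:
  assumes "lin f"
  shows "lin (\<lambda>x. S (f x))"
proof -
  have "lin_on sc UNIV S"
    using hopf by (simp add: cocomm_hopf_algebra_def)
  then have "lin S"
    by (intro linI) (simp_all add: lin_on_def)
  then show ?thesis
    using assms by (rule lin_compose)
qed

lemma eps_add: "eps (a + b) = eps a + eps b"
  and eps_scale: "eps (sc c a) = c * eps a"
  using coalgebra unfolding coalgebra_on_def flin_on_def by blast+

lemma lin_eps: "lin f \<Longrightarrow> lin (\<lambda>x. sc (eps (f x)) c)"
  by (intro linI) (simp_all add: VP.linear_add VP.linear_scale eps_add eps_scale V.scale_left_distrib)

lemma delta_add: "teq sc (delta (a + b)) (delta a @ delta b)"
  using coalgebra by (simp add: coalgebra_on_def)

lemma sweedler_add: "bilinear f \<Longrightarrow> sweedler f (a + b) = sweedler f a + sweedler f b"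
  using teq_tsum_eq[OF delta_add] by simp

lemma sweedler_scale:
  assumes f: "bilinear f"
  shows "sweedler f (sc c a) = sc c (sweedler f a)"
proof -
  have "teq sc (delta (sc c a)) (map (\<lambda>(x, y). (sc c x, y)) (delta a))"
    using coalgebra by (simp add: coalgebra_on_def)
  then have "sweedler f (sc c a) = sweedler (\<lambda>x y. f (sc c x) y) a"
    using teq_tsum_eq[OF _ f] tsum_map_pair[of f "sc c" "\<lambda>y. y"] by simp
  also have "\<dots> = sweedler (\<lambda>x y. sc c (f x y)) a"
    using f by (simp add: bilinear_def linear_iff)
  finally show ?thesis
    by (simp add: tsum_scale)
qed

lemma lin_sweedler: "bilinear f \<Longrightarrow> lin g \<Longrightarrow> lin (\<lambda>x. sweedler f (g x))"
  by (intro linI) (auto simp: VP.linear_add VP.linear_scale sweedler_add sweedler_scale)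

lemmas lin_intros = lin_id lin_add lin_mult_left lin_mult_right lin_scale lin_tsum lin_sweedler
  lin_S lin_eps bilinearI trilinearI quadrilinearI

lemma sweedler_counit_left: "lin g \<Longrightarrow> sweedler (\<lambda>x y. sc (eps x) (g y)) a = g a"
  using coalgebra tsum_lin[of g "\<lambda>x y. sc (eps x) y" "delta a"]
  by (simp add: coalgebra_on_def VP.linear_scale)

lemma sweedler_counit_right: "lin g \<Longrightarrow> sweedler (\<lambda>x y. sc (eps y) (g x)) a = g a"
  using coalgebra tsum_lin[of g "\<lambda>x y. sc (eps y) x" "delta a"]
  by (simp add: coalgebra_on_def VP.linear_scale)

lemma delta_coassoc: "teq3 sc
    (concat (map (\<lambda>(x, y). map (\<lambda>(x1, x2). (x1, x2, y)) (delta x)) (delta a)))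
    (concat (map (\<lambda>(x, y). map (\<lambda>(y1, y2). (x, y1, y2)) (delta y)) (delta a)))"
  using coalgebra by (simp add: coalgebra_on_def)

lemma sweedler_coassoc: "trilinear f \<Longrightarrow>
    sweedler (\<lambda>x y. sweedler (\<lambda>x1 x2. f x1 x2 y) x) a =
    sweedler (\<lambda>x y. sweedler (\<lambda>y1 y2. f x y1 y2) y) a"
  using teq3_tsum3_eq[OF delta_coassoc] by (simp add: tsum3_concat_map case_prod_beta)

lemma cocommutative_on_UNIV: "cocommutative_on sc UNIV delta"
  using hopf by (simp add: cocomm_hopf_algebra_def)

lemma delta_cocomm: "teq sc (delta a) (map (\<lambda>(x, y). (y, x)) (delta a))"
  using cocommutative_on_UNIV by (simp add: cocommutative_on_def)

lemma delta_mult: "teq sc (delta (a * b))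
    (concat (map (\<lambda>(x, y). map (\<lambda>(u, v). (x * u, y * v)) (delta b)) (delta a)))"
  using hopf by (simp add: cocomm_hopf_algebra_def)

lemma sweedler_cocomm: "bilinear f \<Longrightarrow> sweedler f a = sweedler (\<lambda>x y. f y x) a"
  using teq_tsum_eq[OF delta_cocomm] by simp

lemma sweedler_mult: "bilinear f \<Longrightarrow>
    sweedler f (a * b) = sweedler (\<lambda>x y. sweedler (\<lambda>u v. f (x * u) (y * v)) b) a"
  using teq_tsum_eq[OF delta_mult] by (simp add: tsum_concat_map)

lemma delta_one: "teq sc (delta 1) [(1, 1)]"
  using hopf by (simp add: cocomm_hopf_algebra_def)

lemma sweedler_one: "bilinear f \<Longrightarrow> sweedler f 1 = f 1 1"
  using teq_tsum_eq[OF delta_one] by simp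

lemma eps_mult: "eps (a * b) = eps a * eps b"
  using hopf by (simp add: cocomm_hopf_algebra_def)

lemma sweedler_antipode_left: "sweedler (\<lambda>x y. S x * y) a = sc (eps a) 1"
  and sweedler_antipode_right: "sweedler (\<lambda>x y. x * S y) a = sc (eps a) 1"
  using hopf by (simp_all add: cocomm_hopf_algebra_def)

text \<open>Cocommutativity enters the Sweedler computations only here.\<close>

lemma sweedler_middle_swap:
  assumes q: "quadrilinear g"
  shows "sweedler (\<lambda>x y. sweedler (\<lambda>x1 x2. sweedler (\<lambda>y1 y2. g x1 x2 y1 y2) y) x) z =
         sweedler (\<lambda>x y. sweedler (\<lambda>x1 x2. sweedler (\<lambda>y1 y2. g x1 y1 x2 y2) y) x) z"
proof -
  note L = lin_intros lin_quadrilinear[OF q]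
  have inner: "sweedler (\<lambda>y1 y2. sweedler (\<lambda>w1 w2. g x y1 w1 w2) y2) y =
       sweedler (\<lambda>p q. sweedler (\<lambda>q1 q2. g x q1 p q2) q) y" for x y
  proof -
    have "sweedler (\<lambda>y1 y2. sweedler (\<lambda>w1 w2. g x y1 w1 w2) y2) y =
        sweedler (\<lambda>p q. sweedler (\<lambda>p1 p2. g x p1 p2 q) p) y"
      by (rule sweedler_coassoc[symmetric]) (intro L)
    also have "\<dots> = sweedler (\<lambda>p q. sweedler (\<lambda>p1 p2. g x p2 p1 q) p) y"
      by (intro tsum_cong sweedler_cocomm) (intro L)
    also have "\<dots> = sweedler (\<lambda>p q. sweedler (\<lambda>q1 q2. g x q1 p q2) q) y"
      by (rule sweedler_coassoc) (intro L)
    finally show ?thesis .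
  qed
  have "sweedler (\<lambda>x y. sweedler (\<lambda>x1 x2. sweedler (\<lambda>y1 y2. g x1 x2 y1 y2) y) x) z =
      sweedler (\<lambda>x y. sweedler (\<lambda>y1 y2. sweedler (\<lambda>w1 w2. g x y1 w1 w2) y2) y) z"
    by (rule sweedler_coassoc[of "\<lambda>a b w. sweedler (\<lambda>w1 w2. g a b w1 w2) w"]) (intro L)
  also have "\<dots> = sweedler (\<lambda>x y. sweedler (\<lambda>p q. sweedler (\<lambda>q1 q2. g x q1 p q2) q) y) z"
    by (simp only: inner)
  also have "\<dots> = sweedler (\<lambda>x y. sweedler (\<lambda>x1 x2. sweedler (\<lambda>y1 y2. g x1 y1 x2 y2) y) x) z"
    by (rule sweedler_coassoc[of "\<lambda>a b c. sweedler (\<lambda>c1 c2. g a c1 b c2) c", symmetric])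
      (intro L)
  finally show ?thesis .
qed

lemma antipode_one: "S 1 = 1"
proof -
  have "sweedler (\<lambda>x y. S x * y) 1 = S 1 * 1"
    by (rule sweedler_one) (intro lin_intros)
  moreover have "eps 1 = 1"
    using hopf by (simp add: cocomm_hopf_algebra_def)
  ultimately show ?thesis
    using sweedler_antipode_left[of 1] by simp
qed

lemma sweedler_mult_antipode: "sweedler (\<lambda>r s. A * r * S s * C) y = sc (eps y) (A * C)"
proof -
  have "sweedler (\<lambda>r s. A * r * S s * C) y = sweedler (\<lambda>r s. (\<lambda>t. A * t * C) (r * S s)) y"
    by (simp add: mult.assoc)
  also have "\<dots> = A * sweedler (\<lambda>r s. r * S s) y * C"
    by (rule tsum_lin) (intro lin_intros)
  finally show ?thesis
    by (simp add: sweedler_antipode_right scale_mult_left[symmetric] scale_mult_right[symmetric])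
qed

lemma sweedler_antipode_mult: "sweedler (\<lambda>r s. A * S r * s * C) y = sc (eps y) (A * C)"
proof -
  have "sweedler (\<lambda>r s. A * S r * s * C) y = sweedler (\<lambda>r s. (\<lambda>t. A * t * C) (S r * s)) y"
    by (simp add: mult.assoc)
  also have "\<dots> = A * sweedler (\<lambda>r s. S r * s) y * C"
    by (rule tsum_lin) (intro lin_intros)
  finally show ?thesis
    by (simp add: sweedler_antipode_left scale_mult_left[symmetric] scale_mult_right[symmetric])
qed

text \<open>Both expansions evaluate \<open>S(x\<^sub>1y\<^sub>1) x\<^sub>2y\<^sub>2 S(y\<^sub>3) S(x\<^sub>3)\<close>: cancelling \<open>x\<^sub>2y\<^sub>2\<close>
  against \<open>S(y\<^sub>3) S(x\<^sub>3)\<close> leaves \<open>S(xy)\<close>, cancelling it against \<open>S(x\<^sub>1y\<^sub>1)\<close> leaves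
  \<open>S(y) S(x)\<close>.\<close>

lemma antipode_mult_expansion_left:
  "sweedler (\<lambda>x1 x2. sweedler (\<lambda>p q. sweedler (\<lambda>y1 y2.
      sweedler (\<lambda>r s. S (x1 * y1) * p * r * S s * S q) y2) y) x2) x = S (x * y)"
proof -
  have "sweedler (\<lambda>x1 x2. sweedler (\<lambda>p q. sweedler (\<lambda>y1 y2.
      sweedler (\<lambda>r s. S (x1 * y1) * p * r * S s * S q) y2) y) x2) x =
    sweedler (\<lambda>x1 x2. sweedler (\<lambda>p q. sweedler (\<lambda>y1 y2.
      sc (eps y2) (S (x1 * y1) * p * S q)) y) x2) x"
    by (simp only: sweedler_mult_antipode)
  also have "\<dots> = sweedler (\<lambda>x1 x2. sweedler (\<lambda>y1 y2. sweedler (\<lambda>p q.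
      sc (eps y2) (S (x1 * y1) * p * S q)) x2) y) x"
    by (simp only: tsum_swap[of _ "delta y"])
  also have "\<dots> = sweedler (\<lambda>x1 x2. sweedler (\<lambda>y1 y2.
      sc (eps y2) (sc (eps x2) (S (x1 * y1)))) y) x"
    using sweedler_mult_antipode[where C = 1] by (simp only: tsum_scale mult_1_right)
  also have "\<dots> = sweedler (\<lambda>x1 x2. sweedler (\<lambda>y1 y2. sc (eps (x2 * y2)) (S (x1 * y1))) y) x"
    by (simp add: eps_mult mult.commute)
  also have "\<dots> = sweedler (\<lambda>u v. sc (eps v) (S u)) (x * y)"
    by (rule sweedler_mult[symmetric]) (intro lin_intros)
  also have "\<dots> = S (x * y)"
    by (rule sweedler_counit_right) (intro lin_intros)
  finally show ?thesis .
qed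

lemma antipode_mult_expansion_right:
  "sweedler (\<lambda>x1 x2. sweedler (\<lambda>p q. sweedler (\<lambda>y1 y2.
      sweedler (\<lambda>r s. S (x1 * y1) * p * r * S s * S q) y2) y) x2) x = S y * S x"
proof -
  have "sweedler (\<lambda>x1 x2. sweedler (\<lambda>p q. sweedler (\<lambda>y1 y2.
      sweedler (\<lambda>r s. S (x1 * y1) * p * r * S s * S q) y2) y) x2) x =
    sweedler (\<lambda>a c. sweedler (\<lambda>a1 a2. sweedler (\<lambda>y1 y2.
      sweedler (\<lambda>r s. S (a1 * y1) * a2 * r * S s * S c) y2) y) a) x"
    by (rule sweedler_coassoc[of "\<lambda>a b c. sweedler (\<lambda>y1 y2.
        sweedler (\<lambda>r s. S (a * y1) * b * r * S s * S c) y2) y", symmetric]) (intro lin_intros)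
  also have "\<dots> = sweedler (\<lambda>a c. sweedler (\<lambda>a1 a2. sweedler (\<lambda>u s.
      sweedler (\<lambda>y1 r. S (a1 * y1) * a2 * r * S s * S c) u) y) a) x"
  proof -
    have "sweedler (\<lambda>y1 y2. sweedler (\<lambda>r s. S (a1 * y1) * a2 * r * S s * S c) y2) y =
       sweedler (\<lambda>u s. sweedler (\<lambda>y1 r. S (a1 * y1) * a2 * r * S s * S c) u) y" for a1 a2 c
      by (rule sweedler_coassoc[symmetric]) (intro lin_intros)
    then show ?thesis by (simp only:)
  qed
  also have "\<dots> = sweedler (\<lambda>a c. sweedler (\<lambda>u s. sweedler (\<lambda>a1 a2.
      sweedler (\<lambda>y1 r. S (a1 * y1) * (a2 * r) * (S s * S c)) u) a) y) x"
    by (simp only: tsum_swap[of _ "delta y"] mult.assoc)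
  also have "\<dots> = sweedler (\<lambda>a c. sweedler (\<lambda>u s.
      sweedler (\<lambda>p q. S p * q * (S s * S c)) (a * u)) y) x"
  proof -
    have "sweedler (\<lambda>a1 a2. sweedler (\<lambda>y1 r. S (a1 * y1) * (a2 * r) * (S s * S c)) u) a =
      sweedler (\<lambda>p q. S p * q * (S s * S c)) (a * u)" for a u s c
      by (rule sweedler_mult[symmetric]) (intro lin_intros)
    then show ?thesis by (simp only:)
  qed
  also have "\<dots> = sweedler (\<lambda>a c. sweedler (\<lambda>u s. sc (eps a) (sc (eps u) (S s * S c))) y) x"
    using sweedler_antipode_mult[where A = 1] by (simp add: eps_mult mult.commute)
  also have "\<dots> = sweedler (\<lambda>a c. sc (eps a) (sweedler (\<lambda>u s. sc (eps u) (S s * S c)) y)) x"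
    by (simp only: tsum_scale)
  also have "\<dots> = sweedler (\<lambda>a c. sc (eps a) (S y * S c)) x"
    using sweedler_counit_left[of "\<lambda>s. S s * S _"] by (simp add: lin_intros)
  also have "\<dots> = S y * S x"
    by (rule sweedler_counit_left) (intro lin_intros)
  finally show ?thesis .
qed

lemma antipode_mult: "S (x * y) = S y * S x"
  using antipode_mult_expansion_left antipode_mult_expansion_right by simp

lemma sweedler_mult_antipode_fst:
  assumes f: "bilinear f"
  shows "sweedler (\<lambda>r t. f (u * r * S t) v) z = sc (eps z) (f u v)"
proof -
  have "sweedler (\<lambda>r t. f (u * r * S t) v) z = sweedler (\<lambda>r t. (\<lambda>w. f (u * w) v) (r * S t)) z"
    by (simp add: mult.assoc)
  also have "\<dots> = f (u * sweedler (\<lambda>r t. r * S t) z) v"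
    by (rule tsum_lin) (intro lin_intros lin_bilinear_left[OF f])
  also have "\<dots> = sc (eps z) (f u v)"
    using f by (simp add: sweedler_antipode_right scale_mult_right[symmetric] bilinear_def linear_iff)
  finally show ?thesis .
qed

lemma sweedler_mult_antipode_snd:
  assumes f: "bilinear f"
  shows "sweedler (\<lambda>r t. f u (v * r * S t)) z = sc (eps z) (f u v)"
proof -
  have "sweedler (\<lambda>r t. f u (v * r * S t)) z = sweedler (\<lambda>r t. (\<lambda>w. f u (v * w)) (r * S t)) z"
    by (simp add: mult.assoc)
  also have "\<dots> = f u (v * sweedler (\<lambda>r t. r * S t) z)"
    by (rule tsum_lin) (intro lin_intros lin_bilinear_right[OF f])
  also have "\<dots> = sc (eps z) (f u v)"
    using f by (simp add: sweedler_antipode_right scale_mult_right[symmetric] bilinear_def linear_iff)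
  finally show ?thesis .
qed

lemma sweedler_conj_antipode_pair:
  assumes f: "bilinear f"
  shows "sweedler (\<lambda>z1 z2. sweedler (\<lambda>p q. sweedler (\<lambda>r t.
      f (u * p * S r) (v * q * S t)) z2) z1) z = sc (eps z) (f u v)"
proof -
  note L = lin_intros lin_bilinear_left[OF f] lin_bilinear_right[OF f]
  have "sweedler (\<lambda>z1 z2. sweedler (\<lambda>p q. sweedler (\<lambda>r t.
      f (u * p * S r) (v * q * S t)) z2) z1) z =
    sweedler (\<lambda>z1 z2. sweedler (\<lambda>p r. sweedler (\<lambda>q t. f (u * p * S r) (v * q * S t)) z2) z1) z"
    by (rule sweedler_middle_swap[of "\<lambda>p q r t. f (u * p * S r) (v * q * S t)"]) (intro L)
  also have "\<dots> = sweedler (\<lambda>z1 z2. sweedler (\<lambda>p r. sc (eps z2) (f (u * p * S r) v)) z1) z"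
    by (simp only: sweedler_mult_antipode_snd[OF f])
  also have "\<dots> = sweedler (\<lambda>z1 z2. sc (eps z2) (sc (eps z1) (f u v))) z"
    by (simp only: tsum_scale sweedler_mult_antipode_fst[OF f])
  also have "\<dots> = sweedler (\<lambda>z1 z2. sc (eps z1) ((\<lambda>w. sc (eps w) (f u v)) z2)) z"
    by (simp add: mult.commute)
  also have "\<dots> = sc (eps z) (f u v)"
    by (rule sweedler_counit_left) (intro lin_intros)
  finally show ?thesis .
qed

lemma sweedler_delta_antipode_mult:
  assumes f: "bilinear f"
  shows "sweedler (\<lambda>a1 a2. sweedler (\<lambda>p q. sweedler (\<lambda>s t.
      f (p * s * X) (q * t * Y)) a2) (S a1)) a = sc (eps a) (f X Y)"
proof -
  define g where "g m n = f (m * X) (n * Y)" for m n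
  have g: "bilinear g"
    unfolding g_def by (intro lin_intros lin_bilinear_left[OF f] lin_bilinear_right[OF f])
  have "sweedler (\<lambda>p q. sweedler (\<lambda>s t. f (p * s * X) (q * t * Y)) a2) (S a1) =
      sweedler g (S a1 * a2)" for a1 a2
    unfolding g_def by (rule sweedler_mult[symmetric]) (intro lin_intros lin_bilinear_left[OF f]
        lin_bilinear_right[OF f])
  then have "sweedler (\<lambda>a1 a2. sweedler (\<lambda>p q. sweedler (\<lambda>s t.
      f (p * s * X) (q * t * Y)) a2) (S a1)) a = sweedler (\<lambda>a1 a2. sweedler g (S a1 * a2)) a"
    by (simp only:)
  also have "\<dots> = sweedler g (sweedler (\<lambda>a1 a2. S a1 * a2) a)"
    by (rule tsum_lin) (intro lin_intros g)
  also have "\<dots> = sc (eps a) (f X Y)"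
    using g by (simp add: sweedler_antipode_left sweedler_scale sweedler_one g_def)
  finally show ?thesis .
qed

text \<open>Insert \<open>S a = S(a\<^sub>1) \<epsilon>(a\<^sub>2)\<close> and expand \<open>\<epsilon>(a\<^sub>2)\<close> by sweedler_conj_antipode_pair;
  after reassociation, sweedler_delta_antipode_mult collapses \<open>\<Delta>(S(a\<^sub>1) a\<^sub>2)\<close> to a
  counit, leaving \<open>S a\<^sub>3 \<otimes> S a\<^sub>4\<close>.\<close>

lemma sweedler_antipode:
  assumes f: "bilinear f"
  shows "sweedler f (S a) = sweedler (\<lambda>x y. f (S x) (S y)) a"
proof -
  note L = lin_intros lin_bilinear_left[OF f] lin_bilinear_right[OF f]
  have "sweedler f (S a) = sweedler f (sweedler (\<lambda>x y. sc (eps y) (S x)) a)"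
    by (subst sweedler_counit_right) (intro lin_intros, rule refl)
  also have "\<dots> = sweedler (\<lambda>x y. sweedler f (sc (eps y) (S x))) a"
    by (rule tsum_lin[symmetric]) (intro L)
  also have "\<dots> = sweedler (\<lambda>a1 a2. sweedler (\<lambda>m n. sc (eps a2) (f m n)) (S a1)) a"
    by (simp only: sweedler_scale[OF f] tsum_scale)
  also have "\<dots> = sweedler (\<lambda>a1 a2. sweedler (\<lambda>m n. sweedler (\<lambda>z1 z2. sweedler (\<lambda>p q.
      sweedler (\<lambda>r t. f (m * p * S r) (n * q * S t)) z2) z1) a2) (S a1)) a"
    by (simp only: sweedler_conj_antipode_pair[OF f])
  also have "\<dots> = sweedler (\<lambda>a1 a2. sweedler (\<lambda>z1 z2. sweedler (\<lambda>m n. sweedler (\<lambda>p q.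
      sweedler (\<lambda>r t. f (m * p * S r) (n * q * S t)) z2) z1) (S a1)) a2) a"
    by (simp only: tsum_swap[of _ "delta (S a1)" for a1])
  also have "\<dots> = sweedler (\<lambda>a1 a2. sweedler (\<lambda>w1 w2. sweedler (\<lambda>m n. sweedler (\<lambda>p q.
      sweedler (\<lambda>r t. f (m * p * S r) (n * q * S t)) a2) w2) (S w1)) a1) a"
    by (rule sweedler_coassoc[of "\<lambda>w s t. sweedler (\<lambda>m n. sweedler (\<lambda>p q.
        sweedler (\<lambda>r t'. f (m * p * S r) (n * q * S t')) t) s) (S w)", symmetric]) (intro L)
  also have "\<dots> = sweedler (\<lambda>a1 a2. sweedler (\<lambda>r t. sweedler (\<lambda>w1 w2. sweedler (\<lambda>m n.
      sweedler (\<lambda>p q. f (m * p * S r) (n * q * S t)) w2) (S w1)) a1) a2) a"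
  proof -
    have "sweedler (\<lambda>w1 w2. sweedler (\<lambda>m n. sweedler (\<lambda>p q. sweedler (\<lambda>r t.
        f (m * p * S r) (n * q * S t)) a2) w2) (S w1)) a1 =
      sweedler (\<lambda>r t. sweedler (\<lambda>w1 w2. sweedler (\<lambda>m n. sweedler (\<lambda>p q.
        f (m * p * S r) (n * q * S t)) w2) (S w1)) a1) a2" for a1 a2
      by (simp only: tsum_swap[of _ "delta a2"])
    then show ?thesis by (simp only:)
  qed
  also have "\<dots> = sweedler (\<lambda>a1 a2. sc (eps a1) (sweedler (\<lambda>r t. f (S r) (S t)) a2)) a"
    by (simp only: sweedler_delta_antipode_mult[OF f] tsum_scale)
  also have "\<dots> = sweedler (\<lambda>x y. f (S x) (S y)) a"
    by (rule sweedler_counit_left) (intro L)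
  finally show ?thesis .
qed

end

locale rota_baxter_hopf =
  fixes sc :: "'k::field \<Rightarrow> 'h::ring_1 \<Rightarrow> 'h" and delta :: "'h \<Rightarrow> ('h \<times> 'h) list"
    and eps :: "'h \<Rightarrow> 'k" and S B1 B2 :: "'h \<Rightarrow> 'h"
  assumes rbs: "rota_baxter_system sc delta eps S B1 B2"
begin

sublocale cocomm_hopf sc delta eps S
  using rbs by unfold_locales (simp add: rota_baxter_system_def)

abbreviation desc :: "'h \<Rightarrow> 'h \<Rightarrow> 'h" (infixl \<open>\<odot>\<close> 70) where
  "a \<odot> b \<equiv> desc_op delta S B1 B2 a b"

lemma desc_op_sweedler: "a \<odot> b = sweedler (\<lambda>x y. B1 x * b * S (B2 y)) a"
  by (simp add: desc_op_def)

lemma B1_mult: "B1 a * B1 b = B1 (a \<odot> b)"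
  and B2_mult: "B2 a * B2 b = B2 (a \<odot> b)"
  and B1_one: "B1 1 = 1" and B2_one: "B2 1 = 1"
  using rbs by (simp_all add: rota_baxter_system_def)

lemma coalg_hom_B1: "coalg_hom sc delta eps B1"
  and coalg_hom_B2: "coalg_hom sc delta eps B2"
  using rbs by (simp_all add: rota_baxter_system_def)

lemma lin_coalg_hom:
  assumes "coalg_hom sc delta eps B" and "lin f"
  shows "lin (\<lambda>x. B (f x))"
proof -
  have "lin B"
    using assms(1) by (intro linI) (simp_all add: coalg_hom_def lin_on_def)
  then show ?thesis
    using assms(2) by (rule lin_compose)
qed

lemma sweedler_coalg_hom:
  assumes "coalg_hom sc delta eps B" and "bilinear f"
  shows "sweedler f (B a) = sweedler (\<lambda>x y. f (B x) (B y)) a"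
proof -
  have "teq sc (delta (B a)) (map (\<lambda>(x, y). (B x, B y)) (delta a))"
    using assms(1) by (simp add: coalg_hom_def)
  from teq_tsum_eq[OF this assms(2)] show ?thesis
    by simp
qed

lemmas lin_desc_intros = lin_intros lin_coalg_hom[OF coalg_hom_B1] lin_coalg_hom[OF coalg_hom_B2]

lemma lin_desc_op_left: "lin (\<lambda>a. a \<odot> b)"
  unfolding desc_op_sweedler by (intro lin_desc_intros)

lemma lin_desc_op_right: "lin (\<lambda>b. a \<odot> b)"
  unfolding desc_op_sweedler by (intro lin_desc_intros)

lemma sweedler_conj:
  assumes f: "bilinear f"
  shows "sweedler f (B1 x * b * S (B2 y)) = sweedler (\<lambda>x1 x2. sweedler (\<lambda>p q. sweedler (\<lambda>y1 y2.
      f (B1 x1 * p * S (B2 y1)) (B1 x2 * q * S (B2 y2))) y) b) x"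
proof -
  note L = lin_desc_intros lin_bilinear_left[OF f] lin_bilinear_right[OF f]
  define F where "F p q = sweedler (\<lambda>u v. f (p * u) (q * v)) (S (B2 y))" for p q
  have F: "bilinear F"
    unfolding F_def by (intro L)
  have F_expand: "F p q = sweedler (\<lambda>y1 y2. f (p * S (B2 y1)) (q * S (B2 y2))) y" for p q
  proof -
    have "F p q = sweedler (\<lambda>u v. f (p * S u) (q * S v)) (B2 y)"
      unfolding F_def by (rule sweedler_antipode) (intro L)
    also have "\<dots> = sweedler (\<lambda>y1 y2. f (p * S (B2 y1)) (q * S (B2 y2))) y"
      by (rule sweedler_coalg_hom[OF coalg_hom_B2]) (intro L)
    finally show ?thesis .
  qed
  have "sweedler f (B1 x * b * S (B2 y)) = sweedler F (B1 x * b)"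
    unfolding F_def by (rule sweedler_mult) (rule f)
  also have "\<dots> = sweedler (\<lambda>p1 q1. sweedler (\<lambda>p2 q2. F (p1 * p2) (q1 * q2)) b) (B1 x)"
    by (rule sweedler_mult) (rule F)
  also have "\<dots> = sweedler (\<lambda>x1 x2. sweedler (\<lambda>p2 q2. F (B1 x1 * p2) (B1 x2 * q2)) b) x"
    by (rule sweedler_coalg_hom[OF coalg_hom_B1])
      (intro lin_intros lin_bilinear_left[OF F] lin_bilinear_right[OF F])
  finally show ?thesis
    by (simp add: F_expand mult.assoc)
qed

lemma sweedler_desc_op:
  assumes f: "bilinear f"
  shows "sweedler f (a \<odot> b) = sweedler (\<lambda>x y. sweedler (\<lambda>u v. f (x \<odot> u) (y \<odot> v)) b) a"
proof -
  note L = lin_desc_intros lin_bilinear_left[OF f] lin_bilinear_right[OF f]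
  have inner: "sweedler (\<lambda>x1 x2. sweedler (\<lambda>y1 y2.
      f (B1 x1 * u * S (B2 x2)) (B1 y1 * v * S (B2 y2))) y) x = f (x \<odot> u) (y \<odot> v)" for x y u v
  proof -
    have "sweedler (\<lambda>y1 y2. f (B1 x1 * u * S (B2 x2)) (B1 y1 * v * S (B2 y2))) y =
        f (B1 x1 * u * S (B2 x2)) (y \<odot> v)" for x1 x2
      unfolding desc_op_sweedler by (rule tsum_lin) (intro L)
    then have "sweedler (\<lambda>x1 x2. sweedler (\<lambda>y1 y2.
        f (B1 x1 * u * S (B2 x2)) (B1 y1 * v * S (B2 y2))) y) x =
      sweedler (\<lambda>x1 x2. f (B1 x1 * u * S (B2 x2)) (y \<odot> v)) x"
      by (simp only:)
    also have "\<dots> = f (x \<odot> u) (y \<odot> v)"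
      unfolding desc_op_sweedler by (rule tsum_lin) (intro L)
    finally show ?thesis .
  qed
  have "sweedler f (a \<odot> b) = sweedler (\<lambda>x y. sweedler f (B1 x * b * S (B2 y))) a"
    unfolding desc_op_sweedler by (rule tsum_lin[symmetric]) (intro L)
  also have "\<dots> = sweedler (\<lambda>x y. sweedler (\<lambda>x1 x2. sweedler (\<lambda>p q. sweedler (\<lambda>y1 y2.
      f (B1 x1 * p * S (B2 y1)) (B1 x2 * q * S (B2 y2))) y) b) x) a"
    by (simp only: sweedler_conj[OF f])
  also have "\<dots> = sweedler (\<lambda>x y. sweedler (\<lambda>x1 x2. sweedler (\<lambda>y1 y2. sweedler (\<lambda>p q.
      f (B1 x1 * p * S (B2 y1)) (B1 x2 * q * S (B2 y2))) b) y) x) a"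
    by (simp only: tsum_swap[of _ "delta b"])
  also have "\<dots> = sweedler (\<lambda>x y. sweedler (\<lambda>x1 x2. sweedler (\<lambda>y1 y2. sweedler (\<lambda>p q.
      f (B1 x1 * p * S (B2 x2)) (B1 y1 * q * S (B2 y2))) b) y) x) a"
    by (rule sweedler_middle_swap[of "\<lambda>x1 x2 y1 y2. sweedler (\<lambda>p q.
        f (B1 x1 * p * S (B2 y1)) (B1 x2 * q * S (B2 y2))) b"]) (intro L)
  also have "\<dots> = sweedler (\<lambda>x y. sweedler (\<lambda>u v. sweedler (\<lambda>x1 x2. sweedler (\<lambda>y1 y2.
      f (B1 x1 * u * S (B2 x2)) (B1 y1 * v * S (B2 y2))) y) x) b) a"
    by (simp only: tsum_swap[of _ "delta b"])
  also have "\<dots> = sweedler (\<lambda>x y. sweedler (\<lambda>u v. f (x \<odot> u) (y \<odot> v)) b) a"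
    by (simp only: inner)
  finally show ?thesis .
qed

lemma desc_op_assoc: "(a \<odot> b) \<odot> c = a \<odot> (b \<odot> c)"
proof -
  have "(a \<odot> b) \<odot> c = sweedler (\<lambda>x y. B1 x * c * S (B2 y)) (a \<odot> b)"
    by (rule desc_op_sweedler)
  also have "\<dots> = sweedler (\<lambda>x y. sweedler (\<lambda>u v. B1 (x \<odot> u) * c * S (B2 (y \<odot> v))) b) a"
    by (rule sweedler_desc_op) (intro lin_desc_intros)
  also have "\<dots> = sweedler (\<lambda>x y. sweedler (\<lambda>u v.
      (\<lambda>t. B1 x * t * S (B2 y)) (B1 u * c * S (B2 v))) b) a"
    by (simp add: B1_mult[symmetric] B2_mult[symmetric] antipode_mult mult.assoc)
  also have "\<dots> = sweedler (\<lambda>x y. B1 x * (b \<odot> c) * S (B2 y)) a"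
  proof -
    have "sweedler (\<lambda>u v. (\<lambda>t. B1 x * t * S (B2 y)) (B1 u * c * S (B2 v))) b =
        B1 x * (b \<odot> c) * S (B2 y)" for x y
      unfolding desc_op_sweedler by (rule tsum_lin) (intro lin_intros)
    then show ?thesis by (simp only:)
  qed
  also have "\<dots> = a \<odot> (b \<odot> c)"
    by (rule desc_op_sweedler[symmetric])
  finally show ?thesis .
qed

lemma desc_op_one_left: "1 \<odot> b = b"
proof -
  have "1 \<odot> b = B1 1 * b * S (B2 1)"
    unfolding desc_op_sweedler by (rule sweedler_one) (intro lin_desc_intros)
  then show ?thesis
    by (simp add: B1_one B2_one antipode_one)
qed

lemma cocycle_eq_desc_op_one: "cocycle delta S B1 B2 a = a \<odot> 1"
  by (simp add: cocycle_def desc_op_def)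

lemma delta_desc_op_one:
  "teq sc (delta (a \<odot> 1)) (map (\<lambda>(x, y). (x \<odot> 1, y \<odot> 1)) (delta a))"
proof (rule teqI_bilinear)
  fix f assume f: "bilinear f"
  have "sweedler f (a \<odot> 1) = sweedler (\<lambda>x y. sweedler (\<lambda>u v. f (x \<odot> u) (y \<odot> v)) 1) a"
    by (rule sweedler_desc_op[OF f])
  also have "\<dots> = sweedler (\<lambda>x y. f (x \<odot> 1) (y \<odot> 1)) a"
    by (simp only: sweedler_one lin_bilinear_left[OF f] lin_bilinear_right[OF f]
        lin_desc_op_right bilinearI)
  finally show "sweedler f (a \<odot> 1) = tsum f (map (\<lambda>(x, y). (x \<odot> 1, y \<odot> 1)) (delta a))"
    by simp
qed

lemma range_cocycle: "range (cocycle delta S B1 B2) = range (\<lambda>a. a \<odot> 1)"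
  by (simp add: cocycle_eq_desc_op_one[abs_def])

lemma unital_algebra_on_range_cocycle:
  "unital_algebra_on sc (range (cocycle delta S B1 B2)) (desc_op delta S B1 B2) 1"
  unfolding range_cocycle
  by (rule unital_algebra_on_range_mult_unit[OF V.vector_space_axioms lin_desc_op_left
        lin_desc_op_right desc_op_assoc desc_op_one_left])

lemma delta_range_cocycle:
  assumes "a \<in> range (cocycle delta S B1 B2)"
  shows "\<exists>L. set L \<subseteq> range (cocycle delta S B1 B2) \<times> range (cocycle delta S B1 B2)
    \<and> teq sc (delta a) L"
proof -
  obtain b where "a = b \<odot> 1"
    using assms unfolding range_cocycle by auto
  then show ?thesis
    using delta_desc_op_one[of b] unfolding range_cocycle
    by (intro exI[of _ "map (\<lambda>(x, y). (x \<odot> 1, y \<odot> 1)) (delta b)"]) auto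
qed

end

theorem mainTheorem9:
  fixes sc :: "'k::field_char_0 \<Rightarrow> 'h::ring_1 \<Rightarrow> 'h"
    and delta :: "'h \<Rightarrow> ('h \<times> 'h) list" and eps :: "'h \<Rightarrow> 'k"
    and S B1 B2 :: "'h \<Rightarrow> 'h"
  assumes "rota_baxter_system sc delta eps S B1 B2"
  defines "H1 \<equiv> range (cocycle delta S B1 B2)"
  shows "(\<forall>a\<in>H1. \<forall>b\<in>H1. desc_op delta S B1 B2 a b \<in> H1)
    \<and> (\<forall>a\<in>H1. \<exists>L. set L \<subseteq> H1 \<times> H1 \<and> teq sc (delta a) L)
    \<and> unital_algebra_on sc H1 (desc_op delta S B1 B2) 1
    \<and> coalgebra_on sc H1 delta eps \<and> cocommutative_on sc H1 delta"
proof -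
  interpret rota_baxter_hopf sc delta eps S B1 B2
    using assms(1) by unfold_locales
  have algebra: "unital_algebra_on sc H1 (desc_op delta S B1 B2) 1"
    unfolding H1_def by (rule unital_algebra_on_range_cocycle)
  have delta_closed: "\<forall>a\<in>H1. \<exists>L. set L \<subseteq> H1 \<times> H1 \<and> teq sc (delta a) L"
    unfolding H1_def using delta_range_cocycle by blast
  have "coalgebra_on sc H1 delta eps"
    using coalgebra_on_subspace[OF coalgebra _ delta_closed] algebra
    by (simp add: unital_algebra_on_def)
  moreover have "cocommutative_on sc H1 delta"
    using cocommutative_on_subset[OF cocommutative_on_UNIV] by blast
  ultimately show ?thesis
    using algebra delta_closed by (simp add: unital_algebra_on_def)
qed

end
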